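(* Let $v_1,\dots,v_n:[0,1]\to\mathbb R_{\ge0}$ be monotone non-decreasing subadditive valuations with budgets $B_i>0$, let $\bar v_i(y)=\min\{v_i(y),B_i\}$, let $r_1=\arg\max_i\bar v_i(\frac12)$, and let $\bar W^\dagger=\sup\{\bar W(y): y\in\mathbb R^n_{\ge0},\ y_{r_1}=0,\ \sum_{i\ne r_1}y_i=\frac12\}$. Then $\bar v_{r_1}(\frac12)+\bar W^\dagger\ge\frac12\bar W^*$.
   Context: Liquid welfare of an allocation $y\in\mathbb R^n_{\ge0}$: $\bar W(y)=\sum_i\min\{v_i(y_i),B_i\}$; $\bar W^*=\sup\{\bar W(y):y\in\mathbb R^n_{\ge0},\sum_iy_i=1\}$. Subadditive means $v_i(a+b)\le v_i(a)+v_i(b)$ whenever $a,b,a+b\in[0,1]$. *)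

theory Defs
  imports Complex_Main
begin

text \<open>Agents are indexed by i < n. Valuations v i are only meaningful on [0,1].\<close>

definition subadditive_on01 :: "(real \<Rightarrow> real) \<Rightarrow> bool" where
  "subadditive_on01 f \<longleftrightarrow>
     (\<forall>a b. a \<in> {0..1} \<and> b \<in> {0..1} \<and> a + b \<in> {0..1} \<longrightarrow> f (a + b) \<le> f a + f b)"

definition vbar :: "(nat \<Rightarrow> real \<Rightarrow> real) \<Rightarrow> (nat \<Rightarrow> real) \<Rightarrow> nat \<Rightarrow> real \<Rightarrow> real" where
  "vbar v B i t = min (v i t) (B i)"

definition liquid_welfare :: "nat \<Rightarrow> (nat \<Rightarrow> real \<Rightarrow> real) \<Rightarrow> (nat \<Rightarrow> real) \<Rightarrow> (nat \<Rightarrow> real) \<Rightarrow> real" where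
  "liquid_welfare n v B y = (\<Sum>i<n. min (v i (y i)) (B i))"

definition opt_liquid_welfare :: "nat \<Rightarrow> (nat \<Rightarrow> real \<Rightarrow> real) \<Rightarrow> (nat \<Rightarrow> real) \<Rightarrow> real" where
  "opt_liquid_welfare n v B =
     Sup {liquid_welfare n v B y | y. (\<forall>i<n. 0 \<le> y i) \<and> (\<Sum>i<n. y i) = 1}"

definition dagger_liquid_welfare :: "nat \<Rightarrow> (nat \<Rightarrow> real \<Rightarrow> real) \<Rightarrow> (nat \<Rightarrow> real) \<Rightarrow> nat \<Rightarrow> real" where
  "dagger_liquid_welfare n v B r =
     Sup {liquid_welfare n v B y | y. (\<forall>i<n. 0 \<le> y i) \<and> y r = 0 \<and>
            (\<Sum>i\<in>{..<n} - {r}. y i) = 1/2}"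

end

theory Submission
  imports Defs
begin

text \<open>Take any allocation \<open>y\<close> of the whole good. Halve the shares of the agents other than \<open>r\<close> and hand
  half of \<open>r\<close>'s share to one fixed other agent: this gives an allocation with
  \<open>y r = 0\<close> and total \<open>1/2\<close>, and by subadditivity every other agent keeps at least half of its
  capped value. Agent \<open>r\<close> itself loses at most \<open>min (v r 1) (B r) \<le> 2 \<cdot> vbar v B r (1/2)\<close>, again by
  subadditivity. Hence \<open>W(y) \<le> 2 \<cdot> vbar v B r (1/2) + 2 \<cdot> W\<^sup>\<dagger>\<close>.\<close>

lemma subadditive_on01_half:
  assumes "subadditive_on01 f" and "t \<in> {0..1}"
  shows "f t \<le> 2 * f (t / 2)"
proof -
  have "f (t/2 + t/2) \<le> f (t/2) + f (t/2)"
    using assms unfolding subadditive_on01_def atLeastAtMost_iff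
    by (elim allE[of _ "t/2"]) linarith
  then show ?thesis by simp
qed

lemma min_subadditive_on01_half:
  assumes "subadditive_on01 f" and "t \<in> {0..1}" and "0 \<le> c"
  shows "min (f t) c \<le> 2 * min (f (t / 2)) c"
  using subadditive_on01_half[OF assms(1,2)] assms(3) by linarith

lemma liquid_welfare_remove:
  assumes "r < n"
  shows "liquid_welfare n v B y
           = min (v r (y r)) (B r) + (\<Sum>i\<in>{..<n} - {r}. min (v i (y i)) (B i))"
  unfolding liquid_welfare_def using assms by (simp add: sum.remove)

lemma bdd_above_liquid_welfare:
  "bdd_above {liquid_welfare n v B y | y. P y}"
proof (rule bdd_aboveI)
  fix x assume "x \<in> {liquid_welfare n v B y | y. P y}"
  then show "x \<le> (\<Sum>i<n. B i)"
    by (auto simp: liquid_welfare_def intro: sum_mono)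
qed

lemma liquid_welfare_le_dagger:
  assumes "\<forall>i<n. 0 \<le> z i" and "z r = 0" and "(\<Sum>i\<in>{..<n} - {r}. z i) = 1/2"
  shows "liquid_welfare n v B z \<le> dagger_liquid_welfare n v B r"
  unfolding dagger_liquid_welfare_def
  by (rule cSup_upper) (use assms bdd_above_liquid_welfare in auto)

lemma nonneg_le_sum:
  fixes y :: "nat \<Rightarrow> real"
  assumes "\<forall>i<n. 0 \<le> y i" and "i \<in> A" and "A \<subseteq> {..<n}"
  shows "y i \<le> (\<Sum>k\<in>A. y k)"
  using assms by (intro member_le_sum) (auto intro: finite_subset)

lemma halving_allocation:
  fixes y :: "nat \<Rightarrow> real"
  assumes "2 \<le> n" and "r < n" and y0: "\<forall>i<n. 0 \<le> y i" and ys: "(\<Sum>i<n. y i) = 1"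
  obtains z where "\<forall>i<n. 0 \<le> z i" and "z r = 0" and "(\<Sum>i\<in>{..<n} - {r}. z i) = 1/2"
    and "\<And>i. i \<in> {..<n} - {r} \<Longrightarrow> y i / 2 \<le> z i"
proof -
  define j where "j = (if r = 0 then 1 else (0::nat))"
  have j: "j < n" "j \<noteq> r" using assms(1) unfolding j_def by auto
  define z where "z = (\<lambda>i. if i = r then 0 else if i = j then y i / 2 + y r / 2 else y i / 2)"
  have "(\<Sum>i\<in>{..<n} - {r}. z i) = (\<Sum>i\<in>{..<n} - {r}. y i / 2 + (if i = j then y r / 2 else 0))"
    by (rule sum.cong) (auto simp: z_def)
  also have "\<dots> = (\<Sum>i\<in>{..<n} - {r}. y i) / 2 + y r / 2"
    using j by (simp add: sum.distrib sum_divide_distrib)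
  also have "(\<Sum>i\<in>{..<n} - {r}. y i) = 1 - y r"
    using sum.remove[of "{..<n}" r y] assms(2) ys by simp
  finally have "(\<Sum>i\<in>{..<n} - {r}. z i) = 1/2" by (simp add: field_simps)
  moreover have "\<forall>i<n. 0 \<le> z i" using y0 assms(2) by (auto simp: z_def)
  moreover have "y i / 2 \<le> z i" if "i \<in> {..<n} - {r}" for i
    using that y0 assms(2) by (auto simp: z_def)
  ultimately show thesis using that by (auto simp: z_def)
qed

lemma liquid_welfare_le_twice_vbar_dagger:
  assumes "2 \<le> n" and r: "r < n"
    and v0: "0 \<le> v r 0"
    and mono: "\<And>i. i < n \<Longrightarrow> mono_on {0..1} (v i)"
    and subadd: "\<And>i. i < n \<Longrightarrow> subadditive_on01 (v i)"
    and budget: "\<And>i. i < n \<Longrightarrow> 0 \<le> B i"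
    and y0: "\<forall>i<n. 0 \<le> y i" and ys: "(\<Sum>i<n. y i) = 1"
  shows "liquid_welfare n v B y \<le> 2 * vbar v B r (1/2) + 2 * dagger_liquid_welfare n v B r"
proof -
  obtain z where z0: "\<forall>i<n. 0 \<le> z i" and zr: "z r = 0"
      and zs: "(\<Sum>i\<in>{..<n} - {r}. z i) = 1/2" and yz: "\<And>i. i \<in> {..<n} - {r} \<Longrightarrow> y i / 2 \<le> z i"
    using halving_allocation[OF assms(1,2) y0 ys] by blast
  have y1: "y i \<le> 1" if "i < n" for i
    using nonneg_le_sum[OF y0, of i "{..<n}"] that ys by simp
  have z1: "z i \<le> 1" if "i \<in> {..<n} - {r}" for i
    using nonneg_le_sum[OF z0 that] zs by simp
  have others: "(\<Sum>i\<in>{..<n} - {r}. min (v i (y i)) (B i))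
                  \<le> 2 * (\<Sum>i\<in>{..<n} - {r}. min (v i (z i)) (B i))"
    unfolding sum_distrib_left
  proof (rule sum_mono)
    fix i assume i: "i \<in> {..<n} - {r}"
    have "min (v i (y i)) (B i) \<le> 2 * min (v i (y i / 2)) (B i)"
      using min_subadditive_on01_half[OF subadd] i y0 y1 budget by auto
    moreover have "v i (y i / 2) \<le> v i (z i)"
      using mono_onD[OF mono] i y0 yz z1 by auto
    ultimately show "min (v i (y i)) (B i) \<le> 2 * min (v i (z i)) (B i)" by linarith
  qed
  have "min (v r (y r)) (B r) \<le> min (v r 1) (B r)"
    using mono_onD[OF mono[OF r], of "y r" 1] r y0 y1 by force
  also have "\<dots> \<le> 2 * vbar v B r (1/2)"
    using min_subadditive_on01_half[OF subadd[OF r], of 1] budget[OF r] by (simp add: vbar_def)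
  finally have "min (v r (y r)) (B r) \<le> 2 * vbar v B r (1/2)" .
  moreover have "liquid_welfare n v B z \<le> dagger_liquid_welfare n v B r"
    using liquid_welfare_le_dagger[OF z0 zr zs] .
  moreover have "0 \<le> min (v r (z r)) (B r)"
    using v0 zr budget[OF r] by simp
  ultimately show ?thesis
    using liquid_welfare_remove[OF r, of v B y] liquid_welfare_remove[OF r, of v B z] others
    by linarith
qed

lemma opt_liquid_welfare_le:
  assumes "r < n" and "\<And>y. \<forall>i<n. 0 \<le> y i \<Longrightarrow> (\<Sum>i<n. y i) = 1 \<Longrightarrow> liquid_welfare n v B y \<le> M"
  shows "opt_liquid_welfare n v B \<le> M"
proof -
  have "(\<Sum>i<n. (if i = r then 1 else 0::real)) = 1" using assms(1) by (simp add: sum.delta)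
  then have "{liquid_welfare n v B y | y. (\<forall>i<n. 0 \<le> y i) \<and> (\<Sum>i<n. y i) = 1} \<noteq> {}"
    by (auto intro!: exI[of _ "\<lambda>i. if i = r then 1 else 0"])
  then show ?thesis
    unfolding opt_liquid_welfare_def using assms(2) by (intro cSup_least) auto
qed

theorem mainTheorem15:
  fixes n :: nat and v :: "nat \<Rightarrow> real \<Rightarrow> real" and B :: "nat \<Rightarrow> real" and r :: nat
  assumes n2: "n \<ge> 2"
    and nonneg: "\<And>i t. i < n \<Longrightarrow> t \<in> {0..1} \<Longrightarrow> 0 \<le> v i t"
    and mono: "\<And>i. i < n \<Longrightarrow> mono_on {0..1} (v i)"
    and subadd: "\<And>i. i < n \<Longrightarrow> subadditive_on01 (v i)"
    and budget: "\<And>i. i < n \<Longrightarrow> B i > 0"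
    and r: "r < n"
    and rmax: "\<And>i. i < n \<Longrightarrow> vbar v B i (1/2) \<le> vbar v B r (1/2)"
  shows "vbar v B r (1/2) + dagger_liquid_welfare n v B r \<ge> opt_liquid_welfare n v B / 2"
proof -
  have "opt_liquid_welfare n v B \<le> 2 * vbar v B r (1/2) + 2 * dagger_liquid_welfare n v B r"
  proof (rule opt_liquid_welfare_le[OF r])
    fix y :: "nat \<Rightarrow> real"
    assume "\<forall>i<n. 0 \<le> y i" and "(\<Sum>i<n. y i) = 1"
    then show "liquid_welfare n v B y \<le> 2 * vbar v B r (1/2) + 2 * dagger_liquid_welfare n v B r"
      using liquid_welfare_le_twice_vbar_dagger[OF n2 r _ mono subadd] nonneg[OF r] budget
      by (simp add: less_imp_le)
  qed
  then show ?thesis by simp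
qed

end
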